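(* There is $p_0$ such that for every prime $p>p_0$ with $p\equiv 1\pmod 3$ and every set $A\subseteq\mathbb{Z}_p$ with $|A|=(2p+1)/3$, one has $\Lambda_3(A)>0.23$.
   Context: For $f:\mathbb{Z}_p\to\mathbb{C}$, $\Lambda_3(f)=\frac{1}{p^2}\sum_{n,d\in\mathbb{Z}_p} f(n)f(n+d)f(n+2d)$; a set is identified with its indicator function. *)

theory Defs
  imports Complex_Main "HOL-Computational_Algebra.Primes"
begin

definition Lambda3 :: "int \<Rightarrow> (int \<Rightarrow> complex) \<Rightarrow> complex" where
  "Lambda3 p f = (1 / of_int (p^2)) *
     (\<Sum>n\<in>{0..<p}. \<Sum>d\<in>{0..<p}. f n * f ((n + d) mod p) * f ((n + 2*d) mod p))"

definition ind :: "int set \<Rightarrow> int \<Rightarrow> complex" where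
  "ind A x = (if x \<in> A then 1 else 0)"

end

theory Submission imports Defs begin

(* With a = |A|/p and F the Fourier transform of the indicator of A, Lambda3(A) is the sum of
   F(u)^2 F(-2u); the term u = 0 is a^3, and by Parseval the others contribute at most
   (a - a^2) max |F(v)|, the maximum over v <> 0.  To bound |F(v)|, rotate the exponential sum so
   that it becomes a sum of cosines cos(theta_x) over x in A.  The polynomial
   P(c) = c + 1/2 + 7/80 (1/4 - c)^2 (1 - c)^2 satisfies cos theta <= P(cos theta) - 1/2 and
   P(cos theta) >= 0, so the sum is at most the sum of P(cos theta_x) over all of Z_p minus |A|/2.
   P(cos theta) is a trigonometric polynomial of degree 4 with constant term 1609/2560, so for
   p > 4 the full sum is exactly 1609/2560 p.  Hence |F(v)| <= 1609/2560 - a/2, and a >= 2/3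
   yields Lambda3(A) > 0.23. *)

definition ep :: "int \<Rightarrow> int \<Rightarrow> complex" where
  "ep p t = cis (2 * pi * of_int t / of_int p)"

lemma ep_add: "ep p (a + b) = ep p a * ep p b"
  by (simp add: ep_def cis_mult add_divide_distrib distrib_left)

lemma ep_uminus: "ep p (- a) = cnj (ep p a)"
  by (simp add: ep_def cis_cnj)

lemma ep_power: "ep p t ^ n = ep p (int n * t)"
  by (simp add: ep_def DeMoivre mult_ac)

lemma ep_eq_1_iff:
  assumes "p > 0"
  shows "ep p t = 1 \<longleftrightarrow> p dvd t"
proof
  assume "ep p t = 1"
  then have "cos (2 * pi * of_int t / of_int p) = 1"
    unfolding ep_def by (metis cis.sel(1) one_complex.sel(1))
  then obtain n :: int where "2 * pi * of_int t / of_int p = of_int n * 2 * pi"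
    using cos_one_2pi_int by blast
  then have "of_int t = (of_int (n * p) :: real)"
    using assms by (simp add: field_simps)
  then show "p dvd t" by (metis dvd_triv_right of_int_eq_iff)
next
  assume "p dvd t"
  then obtain k where "t = p * k" by auto
  then have "2 * pi * of_int t / of_int p = 2 * pi * of_int k"
    using assms by simp
  then show "ep p t = 1" by (simp add: ep_def)
qed

lemma sum_ep_mult:
  assumes "p > 0"
  shows "(\<Sum>x\<in>{0..<p}. ep p (m * x)) = (if p dvd m then of_int p else 0)"
proof -
  have "{0..<p} = int ` {..<nat p}"
    using assms by (simp add: image_int_atLeastLessThan lessThan_atLeast0)
  then have "(\<Sum>x\<in>{0..<p}. ep p (m * x)) = (\<Sum>n<nat p. ep p m ^ n)"
    by (simp add: sum.reindex ep_power mult.commute)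
  moreover have "ep p m ^ nat p = 1"
    using assms by (simp add: ep_power ep_eq_1_iff)
  ultimately show ?thesis
    using assms by (auto simp: ep_eq_1_iff sum_gp_strict)
qed

lemma sum_mod_shift:
  assumes "(p::int) > 0"
  shows "(\<Sum>d\<in>{0..<p}. g ((n + d) mod p)) = (\<Sum>z\<in>{0..<p}. g z)"
proof (rule sum.reindex_bij_witness[where j = "\<lambda>d. (n + d) mod p" and i = "\<lambda>z. (z - n) mod p"])
  fix d assume "d \<in> {0..<p}"
  then show "((n + d) mod p - n) mod p = d"
    by (simp add: mod_diff_left_eq)
next
  fix z assume "z \<in> {0..<p}"
  then show "(n + (z - n) mod p) mod p = z"
    by (simp add: mod_add_right_eq)
qed (use assms in auto)

definition fourier :: "int \<Rightarrow> (int \<Rightarrow> complex) \<Rightarrow> int \<Rightarrow> complex" where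
  "fourier p f u = (\<Sum>x\<in>{0..<p}. f x * ep p (- (u * x))) / of_int p"

lemma sum_eq_fourier:
  assumes "p \<noteq> 0"
  shows "(\<Sum>x\<in>{0..<p}. f x * ep p (- (u * x))) = of_int p * fourier p f u"
  using assms by (simp add: fourier_def)

lemma fourier_inversion:
  assumes "p > 0"
  shows "f (c mod p) = (\<Sum>u\<in>{0..<p}. fourier p f u * ep p (u * c))"
proof -
  have "(\<Sum>u\<in>{0..<p}. fourier p f u * ep p (u * c))
      = (\<Sum>x\<in>{0..<p}. f x * (\<Sum>u\<in>{0..<p}. ep p ((c - x) * u))) / of_int p"
    unfolding fourier_def sum_divide_distrib sum_distrib_left sum_distrib_right
    by (subst sum.swap) (simp add: mult_ac right_diff_distrib ep_add[symmetric])
  also have "\<dots> = (\<Sum>x\<in>{0..<p}. if c mod p = x then f x * of_int p else 0) / of_int p"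
    using assms by (intro arg_cong[where f = "\<lambda>s. s / _"] sum.cong)
      (auto simp: sum_ep_mult mod_eq_dvd_iff[symmetric])
  also have "\<dots> = f (c mod p)"
    using assms by simp
  finally show ?thesis ..
qed

lemma Lambda3_eq_sum_midpoints:
  assumes "p > 0"
  shows "Lambda3 p f = (\<Sum>n\<in>{0..<p}. \<Sum>z\<in>{0..<p}. f n * f z * f ((2 * z - n) mod p)) / of_int (p^2)"
proof -
  have "(2 * ((n + d) mod p) - n) mod p = (n + 2 * d) mod p" for n d
  proof -
    have "(2 * ((n + d) mod p) - n) mod p = (2 * (n + d) - n) mod p"
      by (metis mod_diff_left_eq mod_mult_right_eq)
    then show ?thesis by (simp add: algebra_simps)
  qed
  then have "(\<Sum>d\<in>{0..<p}. f n * f ((n + d) mod p) * f ((n + 2 * d) mod p))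
      = (\<Sum>z\<in>{0..<p}. f n * f z * f ((2 * z - n) mod p))" for n
    using sum_mod_shift[OF assms, of "\<lambda>z. f n * f z * f ((2 * z - n) mod p)" n] by simp
  then show ?thesis
    by (simp add: Lambda3_def)
qed

lemma Lambda3_fourier:
  assumes "p > 0"
  shows "Lambda3 p f = (\<Sum>u\<in>{0..<p}. fourier p f u ^ 2 * fourier p f (-2 * u))"
proof -
  let ?F = "fourier p f"
  have "p \<noteq> 0"
    using assms by simp
  have "(\<Sum>n\<in>{0..<p}. \<Sum>z\<in>{0..<p}. f n * f z * f ((2 * z - n) mod p))
      = (\<Sum>n\<in>{0..<p}. \<Sum>z\<in>{0..<p}. \<Sum>u\<in>{0..<p}.
           ?F u * (f n * ep p (- (u * n)) * (f z * ep p (- ((-2 * u) * z)))))"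
  proof (intro sum.cong refl)
    fix n z
    have "ep p (u * (2 * z - n)) = ep p (- (u * n)) * ep p (- ((-2 * u) * z))" for u
      using ep_add[of p "- (u * n)" "- ((-2 * u) * z)"] by (simp add: algebra_simps)
    then show "f n * f z * f ((2 * z - n) mod p) = (\<Sum>u\<in>{0..<p}.
           ?F u * (f n * ep p (- (u * n)) * (f z * ep p (- ((-2 * u) * z)))))"
      by (simp add: fourier_inversion[OF assms] sum_distrib_left mult_ac)
  qed
  also have "\<dots> = (\<Sum>u\<in>{0..<p}. \<Sum>n\<in>{0..<p}. \<Sum>z\<in>{0..<p}.
           ?F u * (f n * ep p (- (u * n)) * (f z * ep p (- ((-2 * u) * z)))))"
    by (rule trans[OF sum.cong[OF refl sum.swap] sum.swap])
  also have "\<dots> = (\<Sum>u\<in>{0..<p}. ?F u * ((\<Sum>n\<in>{0..<p}. f n * ep p (- (u * n)))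
           * (\<Sum>z\<in>{0..<p}. f z * ep p (- ((-2 * u) * z)))))"
    unfolding sum_product by (simp only: sum_distrib_left)
  also have "\<dots> = of_int (p^2) * (\<Sum>u\<in>{0..<p}. ?F u ^ 2 * ?F (-2 * u))"
    unfolding sum_eq_fourier[OF \<open>p \<noteq> 0\<close>] by (simp add: sum_distrib_left power2_eq_square mult_ac)
  finally show ?thesis
    using assms by (simp add: Lambda3_eq_sum_midpoints)
qed

lemma parseval:
  assumes "p > 0"
  shows "(\<Sum>u\<in>{0..<p}. norm (fourier p f u) ^ 2) = (\<Sum>x\<in>{0..<p}. norm (f x) ^ 2) / of_int p"
proof -
  have "(\<Sum>x\<in>{0..<p}. f x * cnj (f x))
      = (\<Sum>x\<in>{0..<p}. cnj (f x) * (\<Sum>u\<in>{0..<p}. fourier p f u * ep p (u * x)))"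
    by (intro sum.cong refl)
      (metis fourier_inversion[OF assms] atLeastLessThan_iff mod_pos_pos_trivial mult.commute)
  also have "\<dots> = (\<Sum>u\<in>{0..<p}. fourier p f u * (\<Sum>x\<in>{0..<p}. cnj (f x) * ep p (u * x)))"
    unfolding sum_distrib_left by (subst sum.swap) (simp add: mult_ac)
  also have "\<dots> = of_int p * (\<Sum>u\<in>{0..<p}. fourier p f u * cnj (fourier p f u))"
  proof -
    have "(\<Sum>x\<in>{0..<p}. cnj (f x) * ep p (u * x)) = of_int p * cnj (fourier p f u)" for u
      using assms by (simp add: fourier_def ep_uminus)
    then show ?thesis by (simp add: sum_distrib_left mult_ac)
  qed
  finally have "(\<Sum>u\<in>{0..<p}. fourier p f u * cnj (fourier p f u))
      = (\<Sum>x\<in>{0..<p}. f x * cnj (f x)) / of_int p"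
    using assms by (simp add: field_simps)
  then have "(\<Sum>u\<in>{0..<p}. complex_of_real (norm (fourier p f u) ^ 2))
      = (\<Sum>x\<in>{0..<p}. complex_of_real (norm (f x) ^ 2)) / of_int p"
    unfolding complex_norm_square .
  then have "complex_of_real (\<Sum>u\<in>{0..<p}. norm (fourier p f u) ^ 2)
      = of_real ((\<Sum>x\<in>{0..<p}. norm (f x) ^ 2) / of_int p)"
    by (simp only: of_real_sum of_real_divide of_real_of_int_eq)
  then show ?thesis
    by (simp only: of_real_eq_iff)
qed

definition majorant :: "real \<Rightarrow> real" where
  "majorant c = c + 1/2 + 7/80 * (1/4 - c)^2 * (1 - c)^2"

lemma majorant_nonneg:
  assumes "-1 \<le> c"
  shows "0 \<le> majorant c"
proof -
  consider "-1 \<le> c" "c \<le> -3/4" | "-3/4 \<le> c" "c \<le> -1/2" | "-1/2 \<le> c"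
    using assms by linarith
  then show ?thesis
  proof cases
    case 1
    define s t where "s = 4 * c + 4" and "t = -3 - 4 * c"
    have "majorant c = 3/64 * t^4 + 21/256 * s * t^3 + 1023/20480 * s^2 * t^2
        + 83/2560 * s^3 * t + 23/1280 * s^4"
      unfolding majorant_def s_def t_def by algebra
    moreover have "0 \<le> s" "0 \<le> t" using 1 by (auto simp: s_def t_def)
    ultimately show ?thesis by simp
  next
    case 2
    define s t where "s = 4 * c + 3" and "t = -2 - 4 * c"
    have "majorant c = 23/1280 * t^4 + 57/512 * s * t^3 + 5871/20480 * s^2 * t^2
        + 311/1024 * s^3 * t + 567/5120 * s^4"
      unfolding majorant_def s_def t_def by algebra
    moreover have "0 \<le> s" "0 \<le> t" using 2 by (auto simp: s_def t_def)
    ultimately show ?thesis by simp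
  next
    case 3
    then show ?thesis unfolding majorant_def by simp
  qed
qed

lemma majorant_cos:
  "majorant (cos x) = 1609/2560 + 25/32 * cos x + 343/2560 * cos (2 * x)
     - 7/128 * cos (3 * x) + 7/640 * cos (4 * x)"
proof -
  have "cos (4 * x) = 2 * (cos (2 * x))^2 - 1"
    using cos_double_cos[of "2 * x"] by simp
  then show ?thesis
    unfolding majorant_def cos_double_cos cos_treble_cos by algebra
qed

lemma sum_cos_multiple_eq_0:
  assumes "p > 0" "\<not> p dvd m * v"
  shows "(\<Sum>x\<in>{0..<p}. cos (of_int m * (t + 2 * pi * of_int v * of_int x / of_int p))) = 0"
proof -
  have "cos (of_int m * (t + 2 * pi * of_int v * of_int x / of_int p))
      = Re (cis (of_int m * t) * ep p (m * v * x))" for x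
    by (simp add: ep_def cis_mult algebra_simps)
  then have "(\<Sum>x\<in>{0..<p}. cos (of_int m * (t + 2 * pi * of_int v * of_int x / of_int p)))
      = Re (cis (of_int m * t) * (\<Sum>x\<in>{0..<p}. ep p (m * v * x)))"
    by (simp add: sum_distrib_left)
  then show ?thesis
    using assms by (simp add: sum_ep_mult)
qed

lemma sum_majorant_cos:
  assumes "p > 0" "\<And>m. m \<in> {1..4} \<Longrightarrow> \<not> p dvd m * v"
  shows "(\<Sum>x\<in>{0..<p}. majorant (cos (t + 2 * pi * of_int v * of_int x / of_int p)))
    = 1609/2560 * of_int p"
proof -
  define \<theta> where "\<theta> x = t + 2 * pi * of_int v * of_int x / of_int p" for x
  have "(\<Sum>x\<in>{0..<p}. cos (of_int m * \<theta> x)) = 0" if "m \<in> {1..4}" for m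
    unfolding \<theta>_def using sum_cos_multiple_eq_0[OF assms(1) assms(2)[OF that]] .
  from this[of 1] this[of 2] this[of 3] this[of 4]
  have "(\<Sum>x\<in>{0..<p}. cos (\<theta> x)) = 0" "(\<Sum>x\<in>{0..<p}. cos (2 * \<theta> x)) = 0"
    "(\<Sum>x\<in>{0..<p}. cos (3 * \<theta> x)) = 0" "(\<Sum>x\<in>{0..<p}. cos (4 * \<theta> x)) = 0"
    by simp_all
  moreover have "(\<Sum>x\<in>{0..<p}. majorant (cos (\<theta> x))) = (\<Sum>x\<in>{0..<p}. 1609/2560)
      + 25/32 * (\<Sum>x\<in>{0..<p}. cos (\<theta> x)) + 343/2560 * (\<Sum>x\<in>{0..<p}. cos (2 * \<theta> x))
      - 7/128 * (\<Sum>x\<in>{0..<p}. cos (3 * \<theta> x)) + 7/640 * (\<Sum>x\<in>{0..<p}. cos (4 * \<theta> x))"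
    by (simp add: majorant_cos sum.distrib sum_subtractf sum_distrib_left)
  ultimately show ?thesis
    using assms(1) unfolding \<theta>_def by simp
qed

lemma norm_eq_Re_cis_Arg: "norm z = Re (cis (- Arg z) * z)"
proof -
  have "cis (- Arg z) * z = cis (- Arg z) * rcis (norm z) (Arg z)"
    by (simp only: rcis_cmod_Arg)
  also have "\<dots> = of_real (norm z)"
    by (simp add: rcis_def cis_mult)
  finally show ?thesis by simp
qed

lemma norm_sum_ep_le:
  assumes "p > 0" "\<And>m. m \<in> {1..4} \<Longrightarrow> \<not> p dvd m * v" "A \<subseteq> {0..<p}"
  shows "norm (\<Sum>x\<in>A. ep p (v * x)) \<le> 1609/2560 * of_int p - real (card A) / 2"
proof -
  define t where "t = - Arg (\<Sum>x\<in>A. ep p (v * x))"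
  define \<theta> where "\<theta> x = t + 2 * pi * of_int v * of_int x / of_int p" for x
  have "norm (\<Sum>x\<in>A. ep p (v * x)) = (\<Sum>x\<in>A. cos (\<theta> x))"
    unfolding norm_eq_Re_cis_Arg[of "\<Sum>x\<in>A. ep p (v * x)"] t_def[symmetric]
    by (simp add: sum_distrib_left \<theta>_def ep_def cis_mult algebra_simps)
  also have "\<dots> \<le> (\<Sum>x\<in>A. majorant (cos (\<theta> x)) - 1/2)"
    by (intro sum_mono) (simp add: majorant_def)
  also have "\<dots> = (\<Sum>x\<in>A. majorant (cos (\<theta> x))) - real (card A) / 2"
    by (simp add: sum_subtractf)
  also have "(\<Sum>x\<in>A. majorant (cos (\<theta> x))) \<le> (\<Sum>x\<in>{0..<p}. majorant (cos (\<theta> x)))"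
    using assms(3) by (intro sum_mono2) (simp_all add: majorant_nonneg)
  also have "\<dots> = 1609/2560 * of_int p"
    unfolding \<theta>_def using sum_majorant_cos[OF assms(1,2)] .
  finally show ?thesis by simp
qed

lemma fourier_ind:
  assumes "A \<subseteq> {0..<p}"
  shows "fourier p (ind A) u = (\<Sum>x\<in>A. ep p (- u * x)) / of_int p"
proof -
  have "(\<Sum>x\<in>{0..<p}. ind A x * ep p (- (u * x))) = (\<Sum>x\<in>{0..<p} \<inter> A. ep p (- u * x))"
    by (auto simp: ind_def sum.inter_restrict intro!: sum.cong)
  also have "{0..<p} \<inter> A = A"
    using assms by blast
  finally show ?thesis
    by (simp add: fourier_def)
qed

lemma norm_fourier_ind_le:
  assumes "prime p" "p > 4" "\<not> p dvd u" "A \<subseteq> {0..<p}"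
  shows "norm (fourier p (ind A) u) \<le> 1609/2560 - real (card A) / (2 * of_int p)"
proof -
  have "\<not> p dvd m * - u" if "m \<in> {1..4}" for m
  proof -
    have "\<not> p dvd m"
      using that assms(2) zdvd_not_zless[of m p] by auto
    then show ?thesis
      using assms(1,3) by (simp add: prime_dvd_mult_iff)
  qed
  then have "norm (\<Sum>x\<in>A. ep p (- u * x)) \<le> 1609/2560 * of_int p - real (card A) / 2"
    using assms by (intro norm_sum_ep_le) auto
  then show ?thesis
    using assms by (simp add: fourier_ind norm_divide field_simps)
qed

lemma sum_norm_fourier_ind:
  assumes "p > 0" "A \<subseteq> {0..<p}"
  shows "(\<Sum>u\<in>{0..<p}. norm (fourier p (ind A) u) ^ 2) = real (card A) / of_int p"
proof -
  have "(\<Sum>x\<in>{0..<p}. norm (ind A x) ^ 2) = real (card ({0..<p} \<inter> A))"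
    unfolding ind_def by (simp add: if_distrib[of "\<lambda>z. norm z ^ 2"] sum.If_cases)
  also have "{0..<p} \<inter> A = A"
    using assms by blast
  finally show ?thesis
    using assms by (simp add: parseval)
qed

lemma Re_Lambda3_ge:
  assumes "p > 0" "\<And>u. u \<in> {1..<p} \<Longrightarrow> norm (fourier p f (-2 * u)) \<le> M"
  shows "Re (Lambda3 p f) \<ge> Re (fourier p f 0 ^ 3) - M * (\<Sum>u\<in>{1..<p}. norm (fourier p f u) ^ 2)"
proof -
  define R where "R = (\<Sum>u\<in>{1..<p}. fourier p f u ^ 2 * fourier p f (-2 * u))"
  have "{0..<p} = insert 0 {1..<p}"
    using assms(1) by auto
  then have "Lambda3 p f = fourier p f 0 ^ 3 + R"
    using assms(1) by (simp add: Lambda3_fourier R_def power2_eq_square power3_eq_cube)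
  moreover have "norm R \<le> M * (\<Sum>u\<in>{1..<p}. norm (fourier p f u) ^ 2)"
    unfolding R_def sum_distrib_left using assms(2)
    by (intro order.trans[OF norm_sum] sum_mono)
      (simp add: norm_mult norm_power mult_left_mono mult.commute[of M])
  ultimately show ?thesis
    using abs_Re_le_cmod[of R] by simp
qed

lemma cubic_lower_bound:
  fixes a :: real
  assumes "2/3 \<le> a"
  shows "a^3 - (1609/2560 - a/2) * (a - a^2) > 23/100"
proof -
  define s where "s = a - 2/3"
  have "a^3 - (1609/2560 - a/2) * (a - a^2) - 23/100
      = 121/172800 + 11849/7680 * s + 5449/2560 * s^2 + s^3/2"
    unfolding s_def by (simp add: field_simps power2_eq_square power3_eq_cube)
  moreover have "121/172800 + 11849/7680 * s + 5449/2560 * s^2 + s^3/2 > 0"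
    using assms by (simp add: s_def add_pos_nonneg)
  ultimately show ?thesis
    by linarith
qed

lemma Re_Lambda3_ind_gt:
  assumes "prime p" "p > 4" "A \<subseteq> {0..<p}" "2 * p \<le> 3 * int (card A)"
  shows "Re (Lambda3 p (ind A)) > 23/100"
proof -
  define a where "a = real (card A) / of_int p"
  have p: "p > 0"
    using assms(2) by simp
  have a: "2/3 \<le> a"
    using assms(4) p by (simp add: a_def field_simps)
  have F0: "fourier p (ind A) 0 = of_real a"
    using assms(3) by (simp add: fourier_ind a_def ep_def)
  have "norm (fourier p (ind A) (-2 * u)) \<le> 1609/2560 - a/2" if "u \<in> {1..<p}" for u
  proof -
    have "\<not> p dvd 2" "\<not> p dvd u"
      using that assms(2) zdvd_not_zless[of 2 p] zdvd_not_zless[of u p] by auto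
    then have "\<not> p dvd -2 * u"
      using assms(1) by (simp add: prime_dvd_mult_iff)
    from norm_fourier_ind_le[OF assms(1,2) this assms(3)] show ?thesis
      by (simp add: a_def)
  qed
  then have "Re (Lambda3 p (ind A))
      \<ge> a^3 - (1609/2560 - a/2) * (\<Sum>u\<in>{1..<p}. norm (fourier p (ind A) u) ^ 2)"
    using Re_Lambda3_ge[OF p] F0 by (metis Re_complex_of_real of_real_power)
  also have "(\<Sum>u\<in>{1..<p}. norm (fourier p (ind A) u) ^ 2) = a - a^2"
  proof -
    have "{0..<p} = insert 0 {1..<p}"
      using p by auto
    then show ?thesis
      using sum_norm_fourier_ind[OF p assms(3)] F0 unfolding a_def[symmetric] by simp
  qed
  finally show ?thesis
    using cubic_lower_bound[OF a] by linarith
qed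

theorem mainTheorem11:
  shows "\<exists>p0::int. \<forall>p::int. \<forall>A::int set.
           prime p \<and> p > p0 \<and> p mod 3 = 1 \<and> A \<subseteq> {0..<p} \<and> 3 * int (card A) = 2*p + 1
           \<longrightarrow> Re (Lambda3 p (ind A)) > 0.23"
proof (intro exI[of _ 4] allI impI)
  fix p :: int and A :: "int set"
  (* p mod 3 = 1 only makes (2p + 1)/3 an integer; the bound needs just 3 |A| >= 2 p. *)
  assume "prime p \<and> p > 4 \<and> p mod 3 = 1 \<and> A \<subseteq> {0..<p} \<and> 3 * int (card A) = 2*p + 1"
  then have "Re (Lambda3 p (ind A)) > 23/100"
    by (intro Re_Lambda3_ind_gt) auto
  then show "Re (Lambda3 p (ind A)) > 0.23"
    by simp
qed

end
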